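(* For every integer $n\ge 3$, $\tilde{R}(\dot A_2^{(b)}\sqcup \dot A_2^{(r)},Q_n)=n+2$.
   Context: $A_2$ is the antichain on two vertices; $\dot A_2^{(b)}$ is it colored blue and $\dot A_2^{(r)}$ colored red. The parallel composition $\dot P_1\sqcup\dot P_2$ is the colored poset consisting of disjoint copies of $\dot P_1$ and $\dot P_2$ with every vertex of one incomparable to every vertex of the other; so $\dot A_2^{(b)}\sqcup \dot A_2^{(r)}$ is an antichain of four vertices, two blue and two red. $Q_N$ is the Boolean lattice of all subsets of an $N$-element set ordered by inclusion. In a blue/red coloring of $Q_N$, a copy of a colored poset $\dot P$ is an induced subposet isomorphic to $P$ with matching colors. The poset Erdős–Hajnal number $\tilde{R}(\dot P,Q_n)$ is the minimum $N$ such that every blue/red coloring of $Q_N$ contains a copy of $\dot P$ or a monochromatic induced copy of $Q_n$. *)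

theory Defs
  imports Main
begin

text \<open>Colours: True = blue, False = red.
  A colored poset is a triple (V, le, col): carrier, partial order on V, colouring of V.\<close>

type_synonym 'a cposet = "'a set \<times> ('a \<Rightarrow> 'a \<Rightarrow> bool) \<times> ('a \<Rightarrow> bool)"

definition blue :: bool where "blue = True"
definition red :: bool where "red = False"

definition colored_antichain :: "nat \<Rightarrow> bool \<Rightarrow> nat cposet" where
  "colored_antichain k c = ({..<k}, (\<lambda>x y. x = y), (\<lambda>_. c))"

definition par_comp :: "'a cposet \<Rightarrow> 'b cposet \<Rightarrow> ('a + 'b) cposet" where
  "par_comp P1 P2 =
     (let (V1, le1, c1) = P1; (V2, le2, c2) = P2 in
       (V1 <+> V2,
        (\<lambda>x y. case (x, y) of
              (Inl a, Inl b) \<Rightarrow> le1 a b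
            | (Inr a, Inr b) \<Rightarrow> le2 a b
            | _ \<Rightarrow> False),
        (\<lambda>x. case x of Inl a \<Rightarrow> c1 a | Inr b \<Rightarrow> c2 b)))"

text \<open>Q_N: subsets of {..<N} ordered by inclusion. A blue/red colouring of Q_N is a
  function col :: nat set \<Rightarrow> bool (only its values on Pow {..<N} matter).\<close>
definition has_copy :: "'a cposet \<Rightarrow> nat \<Rightarrow> (nat set \<Rightarrow> bool) \<Rightarrow> bool" where
  "has_copy P N col =
     (let (V, le, c) = P in
       \<exists>f. f ` V \<subseteq> Pow {..<N} \<and> inj_on f V \<and>
           (\<forall>x\<in>V. \<forall>y\<in>V. le x y \<longleftrightarrow> f x \<subseteq> f y) \<and>
           (\<forall>x\<in>V. col (f x) = c x))"

definition has_mono_Q :: "nat \<Rightarrow> nat \<Rightarrow> (nat set \<Rightarrow> bool) \<Rightarrow> bool" where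
  "has_mono_Q n N col =
     (\<exists>f b. f ` Pow {..<n} \<subseteq> Pow {..<N} \<and> inj_on f (Pow {..<n}) \<and>
           (\<forall>X\<in>Pow {..<n}. \<forall>Y\<in>Pow {..<n}. X \<subseteq> Y \<longleftrightarrow> f X \<subseteq> f Y) \<and>
           (\<forall>X\<in>Pow {..<n}. col (f X) = b))"

definition eh_property :: "'a cposet \<Rightarrow> nat \<Rightarrow> nat \<Rightarrow> bool" where
  "eh_property P n N = (\<forall>col. has_copy P N col \<or> has_mono_Q n N col)"

definition poset_EH :: "'a cposet \<Rightarrow> nat \<Rightarrow> nat" where
  "poset_EH P n = (LEAST N. eh_property P n N)"

end

theory Submission
  imports Defs
begin

text \<open>
  Lower bound: colour only the empty set and the full set red. Any two red sets are comparable,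
  so there is no copy of the pattern; a red \<open>Q\<^sub>n\<close> would need three red sets, and a blue
  one avoids the bottom and the top of \<open>Q\<^sub>N\<close>, so its chain of length \<open>n\<close> forces \<open>N \<ge> n + 2\<close>.

  Upper bound, \<open>N = n + 2\<close>: for \<open>i \<noteq> j\<close> the sets containing \<open>i\<close> but not \<open>j\<close> form a
  subcube \<open>Q(i,j) \<cong> Q\<^sub>n\<close>, so none of them is monochromatic. Every set of \<open>Q(i,j)\<close> is
  incomparable with every set of \<open>Q(j,i)\<close>; without a copy of the pattern, one of the two
  subcubes is therefore tame: incomparable sets in it have equal colours. All of a tame
  \<open>Q(i,j)\<close> except its bottom \<open>{i}\<close> and top \<open>[N] - {j}\<close> then has one colour, and sets of
  size at most 3 lying in two subcubes show that this colour \<open>c\<close> does not depend on the tame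
  pair. So for every tame pair \<open>(i,j)\<close> the set \<open>{i}\<close> or \<open>[N] - {j}\<close> has colour \<open>\<noteq> c\<close>.
  On the other hand, two singletons (or two co-singletons) of colour \<open>\<noteq> c\<close> would form the
  pattern together with two \<open>c\<close>-coloured sets taken from a tame path \<open>x \<rightarrow> y \<rightarrow> z\<close>. A tame
  pair avoiding the at most two exceptional points gives the contradiction.
\<close>

lemma inj_on_if_order_embedding:
  assumes "\<forall>X\<in>A. \<forall>Y\<in>A. X \<subseteq> Y \<longleftrightarrow> f X \<subseteq> f Y"
  shows "inj_on f A"
  using assms by (intro inj_onI) blast

lemma card_order_embedding_chain:
  assumes emb: "\<forall>X\<in>Pow {..<n}. \<forall>Y\<in>Pow {..<n}. X \<subseteq> Y \<longleftrightarrow> f X \<subseteq> f Y"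
    and fin: "finite (f {..<n})" and "k \<le> n"
  shows "card (f {}) + k \<le> card (f {..<k})"
  using \<open>k \<le> n\<close>
proof (induction k)
  case 0
  then show ?case by simp
next
  case (Suc k)
  have in_cube: "{..<k} \<in> Pow {..<n}" "{..<Suc k} \<in> Pow {..<n}"
    using Suc.prems by auto
  have "{..<k} \<subset> {..<Suc k}"
    by auto
  then have "f {..<k} \<subset> f {..<Suc k}"
    using emb in_cube by blast
  moreover have "finite (f {..<Suc k})"
    using emb Suc.prems fin by (metis Pow_iff finite_subset lessThan_subset_iff order_refl)
  ultimately have "card (f {..<k}) < card (f {..<Suc k})"
    by (rule psubset_card_mono[rotated])
  then show ?case using Suc by simp
qed

lemma has_mono_Q_if_monochromatic_interval:
  assumes "S \<union> V \<subseteq> {..<N}" "S \<inter> V = {}" "card V = n"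
    and mono: "\<forall>Y\<subseteq>V. col (S \<union> Y) = b"
  shows "has_mono_Q n N col"
proof -
  have "finite V"
    using assms(1) finite_subset by blast
  then obtain g where g: "bij_betw g {..<n} V"
    using \<open>card V = n\<close> finite_same_card_bij[of "{..<n}" V] by auto
  define f where "f X = S \<union> g ` X" for X
  have g_in: "g ` X \<subseteq> V" if "X \<in> Pow {..<n}" for X
    using g that by (auto simp: bij_betw_def)
  have emb: "\<forall>X\<in>Pow {..<n}. \<forall>Y\<in>Pow {..<n}. X \<subseteq> Y \<longleftrightarrow> f X \<subseteq> f Y"
  proof (intro ballI)
    fix X Y assume X: "X \<in> Pow {..<n}" and Y: "Y \<in> Pow {..<n}"
    have "f X \<subseteq> f Y \<longleftrightarrow> g ` X \<subseteq> g ` Y"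
      using g_in[OF X] g_in[OF Y] \<open>S \<inter> V = {}\<close> unfolding f_def by blast
    also have "\<dots> \<longleftrightarrow> X \<subseteq> Y"
    proof
      assume XY: "g ` X \<subseteq> g ` Y"
      show "X \<subseteq> Y"
      proof
        fix x assume "x \<in> X"
        then obtain y where "y \<in> Y" "g x = g y"
          using XY by blast
        moreover have "inj_on g {..<n}"
          using g by (simp add: bij_betw_def)
        ultimately show "x \<in> Y"
          using X Y \<open>x \<in> X\<close> inj_onD[of g "{..<n}" x y] by auto
      qed
    qed blast
    finally show "X \<subseteq> Y \<longleftrightarrow> f X \<subseteq> f Y" ..
  qed
  show ?thesis
    unfolding has_mono_Q_def
  proof (intro exI[of _ f] exI[of _ b] conjI emb inj_on_if_order_embedding)
    show "f ` Pow {..<n} \<subseteq> Pow {..<N}"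
      using g_in assms(1) unfolding f_def by (intro image_subsetI) blast
    show "\<forall>X\<in>Pow {..<n}. col (f X) = b"
      using g_in mono unfolding f_def by simp
  qed
qed

lemma fresh_subset_exists:
  assumes "finite A" "card A + k \<le> N"
  shows "\<exists>B\<subseteq>{..<N} - A. card B = k"
proof -
  have "k \<le> card ({..<N} - A)"
    using assms diff_card_le_card_Diff[of A "{..<N}"] by simp
  then show ?thesis
    using obtain_subset_with_card_n by metis
qed

lemma tournament3_path:
  assumes "u \<noteq> v" "v \<noteq> w" "u \<noteq> w" "R u v \<or> R v u" "R v w \<or> R w v" "R u w \<or> R w u"
  obtains x y z where "x \<in> {u, v, w}" "y \<in> {u, v, w}" "z \<in> {u, v, w}"
    "x \<noteq> y" "y \<noteq> z" "x \<noteq> z" "R x y" "R y z"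
  using assms by (cases "R u v"; cases "R v w"; cases "R u w") (blast intro: that)+

abbreviation A2b_A2r :: "(nat + nat) cposet" where
  "A2b_A2r \<equiv> par_comp (colored_antichain 2 blue) (colored_antichain 2 red)"

definition incomparable :: "'a set \<Rightarrow> 'a set \<Rightarrow> bool" where
  "incomparable X Y \<longleftrightarrow> \<not> X \<subseteq> Y \<and> \<not> Y \<subseteq> X"

lemma incomparable_sym: "incomparable X Y \<Longrightarrow> incomparable Y X"
  unfolding incomparable_def by blast

lemma A2b_A2r_eq:
  "A2b_A2r = ({..<2} <+> {..<2},
     (\<lambda>x y. case (x, y) of (Inl a, Inl b) \<Rightarrow> a = b | (Inr a, Inr b) \<Rightarrow> a = b | _ \<Rightarrow> False),
     (\<lambda>x. case x of Inl _ \<Rightarrow> True | Inr _ \<Rightarrow> False))"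
  by (simp add: par_comp_def colored_antichain_def blue_def red_def)

lemma has_copy_A2b_A2rI:
  assumes "X1 \<subseteq> {..<N}" "X2 \<subseteq> {..<N}" "Y1 \<subseteq> {..<N}" "Y2 \<subseteq> {..<N}"
    and "incomparable X1 X2" "incomparable Y1 Y2"
    and "incomparable X1 Y1" "incomparable X1 Y2" "incomparable X2 Y1" "incomparable X2 Y2"
    and "col X1 = c" "col X2 = c" "col Y1 \<noteq> c" "col Y2 \<noteq> c"
  shows "has_copy A2b_A2r N col"
proof -
  have V: "{..<2::nat} <+> {..<2::nat} = {Inl 0, Inl 1, Inr 0, Inr 1}"
    by (auto simp: numeral_2_eq_2 less_Suc_eq)
  have copy: "has_copy A2b_A2r N col"
    if "B1 \<subseteq> {..<N}" "B2 \<subseteq> {..<N}" "R1 \<subseteq> {..<N}" "R2 \<subseteq> {..<N}"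
      "incomparable B1 B2" "incomparable R1 R2"
      "incomparable B1 R1" "incomparable B1 R2" "incomparable B2 R1" "incomparable B2 R2"
      "col B1" "col B2" "\<not> col R1" "\<not> col R2" for B1 B2 R1 R2
    unfolding has_copy_def A2b_A2r_eq Let_def case_prod_conv V
    by (rule exI[of _ "case_sum (\<lambda>k. if k = 0 then B1 else B2) (\<lambda>k. if k = 0 then R1 else R2)"])
      (use that in \<open>auto simp: incomparable_def inj_on_def\<close>)
  show ?thesis
  proof (cases c)
    case True
    then show ?thesis using assms by (intro copy[of X1 X2 Y1 Y2]) auto
  next
    case False
    then show ?thesis using assms by (intro copy[of Y1 Y2 X1 X2]) (auto intro: incomparable_sym)
  qed
qed

lemma has_copy_A2b_A2rD:
  assumes "has_copy A2b_A2r N col"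
  obtains R1 R2 where "R1 \<subseteq> {..<N}" "R2 \<subseteq> {..<N}" "incomparable R1 R2" "\<not> col R1" "\<not> col R2"
proof -
  obtain f where f: "f ` ({..<2::nat} <+> {..<2::nat}) \<subseteq> Pow {..<N}"
    "\<forall>x\<in>{..<2::nat} <+> {..<2::nat}. \<forall>y\<in>{..<2::nat} <+> {..<2::nat}.
       (case (x, y) of (Inl a, Inl b) \<Rightarrow> a = b | (Inr a, Inr b) \<Rightarrow> a = b | _ \<Rightarrow> False) \<longleftrightarrow> f x \<subseteq> f y"
    "\<forall>x\<in>{..<2::nat} <+> {..<2::nat}. col (f x) = (case x of Inl _ \<Rightarrow> True | Inr _ \<Rightarrow> False)"
    using assms unfolding has_copy_def A2b_A2r_eq by auto
  have red: "Inr 0 \<in> {..<2::nat} <+> {..<2::nat}" "Inr 1 \<in> {..<2::nat} <+> {..<2::nat}"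
    by auto
  show ?thesis
    using f(1) f(2)[rule_format, OF red] f(2)[rule_format, OF red(2,1)] f(3) red
    by (intro that[of "f (Inr 0)" "f (Inr 1)"]) (auto simp: incomparable_def)
qed

definition ends_red :: "nat \<Rightarrow> nat set \<Rightarrow> bool" where
  "ends_red N X \<longleftrightarrow> X \<noteq> {} \<and> X \<noteq> {..<N}"

lemma not_has_copy_ends_red: "\<not> has_copy A2b_A2r N (ends_red N)"
proof
  assume "has_copy A2b_A2r N (ends_red N)"
  then obtain R1 R2 where "incomparable R1 R2" "\<not> ends_red N R1" "\<not> ends_red N R2"
    by (rule has_copy_A2b_A2rD)
  then show False
    unfolding ends_red_def incomparable_def by auto
qed

lemma not_has_mono_Q_ends_red:
  assumes "n \<ge> 2" "N < n + 2"
  shows "\<not> has_mono_Q n N (ends_red N)"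
proof
  assume "has_mono_Q n N (ends_red N)"
  then obtain f b where f: "f ` Pow {..<n} \<subseteq> Pow {..<N}"
    and emb: "\<forall>X\<in>Pow {..<n}. \<forall>Y\<in>Pow {..<n}. X \<subseteq> Y \<longleftrightarrow> f X \<subseteq> f Y"
    and mono: "\<forall>X\<in>Pow {..<n}. ends_red N (f X) = b"
    unfolding has_mono_Q_def by (elim exE conjE) (rule that)
  show False
  proof (cases b)
    case True
    have top: "f {..<n} \<subseteq> {..<N}" "f {..<n} \<noteq> {..<N}"
      using f mono True unfolding ends_red_def by auto
    then have fin: "finite (f {..<n})"
      using finite_subset by blast
    have "f {} \<noteq> {}"
      using mono True unfolding ends_red_def by auto
    moreover have "f {} \<subseteq> f {..<n}"
      using emb by blast
    ultimately have "card (f {}) \<ge> 1"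
      using fin by (simp add: Suc_le_eq card_gt_0_iff finite_subset)
    then have "1 + n \<le> card (f {..<n})"
      using card_order_embedding_chain[OF emb fin order_refl] by linarith
    moreover have "card (f {..<n}) < N"
      using psubset_card_mono[of "{..<N}" "f {..<n}"] top by auto
    ultimately show False
      using assms by simp
  next
    case False
    have sub: "{{}, {0}, {1}} \<subseteq> Pow {..<n}"
      using assms by auto
    then have "card (f ` {{}, {0}, {1}}) = 3"
      using inj_on_subset[OF inj_on_if_order_embedding[OF emb] sub] by (simp add: card_image)
    moreover have "f ` {{}, {0}, {1}} \<subseteq> {{}, {..<N}}"
      using mono False sub unfolding ends_red_def by blast
    then have "card (f ` {{}, {0}, {1}}) \<le> card {{}, {..<N::nat}}"
      by (intro card_mono) auto
    moreover have "card {{}, {..<N::nat}} \<le> 2"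
      by (simp add: card_insert_if)
    ultimately show False
      by linarith
  qed
qed

lemma not_eh_property_A2b_A2r:
  assumes "n \<ge> 2" "N < n + 2"
  shows "\<not> eh_property A2b_A2r n N"
  using not_has_copy_ends_red not_has_mono_Q_ends_red[OF assms] unfolding eh_property_def by blast

definition subcube :: "nat \<Rightarrow> nat \<Rightarrow> nat \<Rightarrow> nat set set" where
  "subcube N i j = {X. X \<subseteq> {..<N} \<and> i \<in> X \<and> j \<notin> X}"

definition inner_subcube :: "nat \<Rightarrow> nat \<Rightarrow> nat \<Rightarrow> nat set set" where
  "inner_subcube N i j = subcube N i j - {{i}, {..<N} - {j}}"

definition tame_pair :: "(nat set \<Rightarrow> bool) \<Rightarrow> nat \<Rightarrow> nat \<Rightarrow> nat \<Rightarrow> bool" where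
  "tame_pair col N i j \<longleftrightarrow> i < N \<and> j < N \<and> i \<noteq> j \<and>
     (\<forall>X\<in>subcube N i j. \<forall>Y\<in>subcube N i j. incomparable X Y \<longrightarrow> col X = col Y)"

lemma tame_pairD: "tame_pair col N i j \<Longrightarrow> i < N \<and> j < N \<and> i \<noteq> j"
  unfolding tame_pair_def by blast

lemma subcube_swap_incomparable:
  "X \<in> subcube N i j \<Longrightarrow> Y \<in> subcube N j i \<Longrightarrow> incomparable X Y"
  unfolding subcube_def incomparable_def by blast

lemma small_set_in_inner_subcube:
  assumes "Z \<subseteq> {..<N}" "i \<in> Z" "j \<notin> Z" "Z \<noteq> {i}" "j < N" "card Z + 2 \<le> N"
  shows "Z \<in> inner_subcube N i j"
proof -
  have "card ({..<N} - {j}) = N - 1"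
    using \<open>j < N\<close> by simp
  then have "Z \<noteq> {..<N} - {j}"
    using assms(6) by auto
  then show ?thesis
    using assms unfolding inner_subcube_def subcube_def by blast
qed

lemma compl_in_inner_subcube:
  assumes "X \<in> inner_subcube N i j" "j < N"
  shows "{..<N} - X \<in> inner_subcube N j i"
  using assms unfolding inner_subcube_def subcube_def by auto

lemma subcube_not_monochromatic:
  assumes "\<not> has_mono_Q n N col" "N = n + 2" "i < N" "j < N" "i \<noteq> j"
  shows "\<exists>X\<in>subcube N i j. col X \<noteq> c"
proof (rule ccontr)
  assume mono: "\<not> ?thesis"
  have "\<forall>Y\<subseteq>{..<N} - {i, j}. col ({i} \<union> Y) = c"
  proof (intro allI impI)
    fix Y assume Y: "Y \<subseteq> {..<N} - {i, j}"
    have "{i} \<union> Y \<in> subcube N i j"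
      using Y assms(3,5) unfolding subcube_def by blast
    then show "col ({i} \<union> Y) = c"
      using mono by blast
  qed
  moreover have "card ({..<N} - {i, j}) = n"
    using assms(2-5) by (simp add: card_Diff_subset)
  moreover have "{i} \<union> ({..<N} - {i, j}) \<subseteq> {..<N}" "{i} \<inter> ({..<N} - {i, j}) = {}"
    using assms(3) by auto
  ultimately have "has_mono_Q n N col"
    by (intro has_mono_Q_if_monochromatic_interval[of "{i}" "{..<N} - {i, j}"])
  then show False
    using assms(1) by blast
qed

lemma subcube_end_off_colour:
  assumes "\<not> has_mono_Q n N col" "N = n + 2" "i < N" "j < N" "i \<noteq> j"
    and inner: "\<forall>X\<in>inner_subcube N i j. col X = c"
  shows "col {i} \<noteq> c \<or> col ({..<N} - {j}) \<noteq> c"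
proof -
  obtain W where "W \<in> subcube N i j" "col W \<noteq> c"
    using subcube_not_monochromatic[OF assms(1-5), of c] by blast
  then have "W \<notin> inner_subcube N i j"
    using inner by blast
  then have "W = {i} \<or> W = {..<N} - {j}"
    using \<open>W \<in> subcube N i j\<close> unfolding inner_subcube_def by blast
  then show ?thesis
    using \<open>col W \<noteq> c\<close> by blast
qed

lemma tame_pair_or_swap:
  assumes "\<not> has_copy A2b_A2r N col" "i < N" "j < N" "i \<noteq> j"
  shows "tame_pair col N i j \<or> tame_pair col N j i"
proof (rule ccontr)
  assume "\<not> ?thesis"
  then obtain X1 Y1 X2 Y2 where
    XY1: "X1 \<in> subcube N i j" "Y1 \<in> subcube N i j" "incomparable X1 Y1" "col X1 \<noteq> col Y1" and
    XY2: "X2 \<in> subcube N j i" "Y2 \<in> subcube N j i" "incomparable X2 Y2" "col X2 \<noteq> col Y2"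
    using assms(2-4) unfolding tame_pair_def by blast
  obtain P Q where PQ: "P \<in> {X2, Y2}" "Q \<in> {X2, Y2}" "incomparable P Q"
      "col P = col X1" "col Q \<noteq> col X1"
    using XY2(3,4) incomparable_sym by (cases "col X2 = col X1") blast+
  have "has_copy A2b_A2r N col"
  proof (rule has_copy_A2b_A2rI[of X1 N P Y1 Q])
    show "X1 \<subseteq> {..<N}" "P \<subseteq> {..<N}" "Y1 \<subseteq> {..<N}" "Q \<subseteq> {..<N}"
      using XY1 XY2 PQ unfolding subcube_def by auto
    show "incomparable X1 P" "incomparable X1 Q" "incomparable Y1 Q" "incomparable P Y1"
      using XY1 XY2 PQ subcube_swap_incomparable incomparable_sym by blast+
  qed (use XY1 PQ in auto)
  then show False
    using assms(1) by blast
qed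

lemma tame_pair_inner_monochromatic:
  assumes tame: "tame_pair col N i j"
    and "X \<in> inner_subcube N i j" "Y \<in> inner_subcube N i j"
  shows "col X = col Y"
proof -
  have nested: "col X = col Y"
    if X: "X \<in> inner_subcube N i j" and Y: "Y \<in> inner_subcube N i j" and "X \<subseteq> Y" for X Y
  proof -
    obtain e where e: "e < N" "e \<notin> Y" "e \<noteq> j"
      using Y unfolding inner_subcube_def subcube_def by blast
    \<comment> \<open>\<open>{i, e}\<close> bridges \<open>X\<close> and \<open>Y\<close>: both lie strictly above \<open>{i}\<close> and miss \<open>e\<close>.\<close>
    have "{i, e} \<in> subcube N i j"
      using tame e unfolding tame_pair_def subcube_def by auto
    moreover have "incomparable X {i, e}" "incomparable Y {i, e}"
      using X Y e \<open>X \<subseteq> Y\<close> unfolding inner_subcube_def subcube_def incomparable_def by auto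
    ultimately show ?thesis
      using tame X Y unfolding tame_pair_def inner_subcube_def by (metis DiffD1)
  qed
  show ?thesis
  proof (cases "incomparable X Y")
    case True
    then show ?thesis
      using tame assms(2,3) unfolding tame_pair_def inner_subcube_def by blast
  next
    case False
    then show ?thesis
      using nested[OF assms(2,3)] nested[OF assms(3,2)] unfolding incomparable_def by auto
  qed
qed

lemma tame_pairs_inner_colour_eq_unlinked:
  assumes "N \<ge> 5" "tame_pair col N i j" "tame_pair col N k l" "i \<noteq> l" "k \<noteq> j"
    and X: "X \<in> inner_subcube N i j" and Y: "Y \<in> inner_subcube N k l"
  shows "col X = col Y"
proof -
  have ijkl: "i < N" "j < N" "k < N" "l < N" "i \<noteq> j" "k \<noteq> l"
    using tame_pairD[OF assms(2)] tame_pairD[OF assms(3)] by auto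
  have "card {i, j, k, l} + 1 \<le> N"
    using card_length[of "[i, j, k, l]"] assms(1) by simp
  then obtain B where "B \<subseteq> {..<N} - {i, j, k, l}" "card B = 1"
    using fresh_subset_exists[of "{i, j, k, l}" 1 N] by auto
  then obtain m where m: "m < N" "m \<notin> {i, j, k, l}"
    by (auto simp: card_1_singleton_iff)
  have card: "card {i, k, m} + 2 \<le> N"
    using card_length[of "[i, k, m]"] assms(1) by simp
  have "{i, k, m} \<in> inner_subcube N i j"
    using ijkl m card assms(5) by (intro small_set_in_inner_subcube) auto
  moreover have "{i, k, m} \<in> inner_subcube N k l"
    using ijkl m card assms(4,5) by (intro small_set_in_inner_subcube) auto
  ultimately show ?thesis
    using tame_pair_inner_monochromatic assms(2,3) X Y by metis
qed

lemma tame_pairs_inner_colour_eq: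
  assumes "N \<ge> 5" "\<not> has_copy A2b_A2r N col" "tame_pair col N i j" "tame_pair col N k l"
    and X: "X \<in> inner_subcube N i j" and Y: "Y \<in> inner_subcube N k l"
  shows "col X = col Y"
proof (cases "i \<noteq> l \<and> k \<noteq> j")
  case True
  then show ?thesis
    using tame_pairs_inner_colour_eq_unlinked assms by blast
next
  case False
  \<comment> \<open>Linked pairs are compared through a third tame pair on two fresh points.\<close>
  then have "{i, j, k, l} = set [i, j, k] \<or> {i, j, k, l} = set [i, j, l]"
    by auto
  then have "card {i, j, k, l} + 2 \<le> N"
    using card_length[of "[i, j, k]"] card_length[of "[i, j, l]"] assms(1) by auto
  then obtain B where "B \<subseteq> {..<N} - {i, j, k, l}" "card B = 2"
    using fresh_subset_exists[of "{i, j, k, l}" 2 N] by auto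
  then obtain p q where pq: "p < N" "q < N" "p \<noteq> q" "p \<notin> {i, j, k, l}" "q \<notin> {i, j, k, l}"
    by (auto simp: card_2_iff)
  obtain a b where ab: "{a, b} = {p, q}" "tame_pair col N a b"
    using tame_pair_or_swap[OF assms(2) pq(1-3)] by blast
  have "i < N"
    using tame_pairD[OF assms(3)] by blast
  have fresh: "a < N" "b < N" "a \<noteq> b" "a \<notin> {i, j, k, l}" "b \<notin> {i, j, k, l}"
    using ab pq by (auto simp: doubleton_eq_iff)
  moreover have "card {a, i} + 2 \<le> N"
    using card_length[of "[a, i]"] assms(1) by simp
  ultimately have Z: "{a, i} \<in> inner_subcube N a b"
    using \<open>i < N\<close> by (intro small_set_in_inner_subcube) auto
  have "col X = col {a, i}" "col {a, i} = col Y"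
    using tame_pairs_inner_colour_eq_unlinked[OF assms(1,3) ab(2) _ _ X Z]
      tame_pairs_inner_colour_eq_unlinked[OF assms(1) ab(2) assms(4) _ _ Z Y] fresh by auto
  then show ?thesis
    by simp
qed

lemma tame_pairs_common_inner_colour:
  assumes "N \<ge> 5" "\<not> has_copy A2b_A2r N col"
  obtains c where "\<And>i j X. tame_pair col N i j \<Longrightarrow> X \<in> inner_subcube N i j \<Longrightarrow> col X = c"
proof (cases "\<exists>i j X. tame_pair col N i j \<and> X \<in> inner_subcube N i j")
  case True
  then obtain i j X where "tame_pair col N i j" "X \<in> inner_subcube N i j"
    by blast
  then show ?thesis
    using that[of "col X"] tame_pairs_inner_colour_eq[OF assms] by metis
next
  case False
  then show ?thesis
    using that by blast
qed

lemma tame_path_avoiding: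
  assumes "N \<ge> 5" "\<not> has_copy A2b_A2r N col"
  obtains x y z where "x < N" "y < N" "z < N" "x \<noteq> y" "y \<noteq> z" "x \<noteq> z"
    "{x, y, z} \<inter> {i, i'} = {}" "tame_pair col N x y" "tame_pair col N y z"
proof -
  have "card {i, i'} + 3 \<le> N"
    using card_length[of "[i, i']"] assms(1) by simp
  then obtain B where "B \<subseteq> {..<N} - {i, i'}" "card B = 3"
    using fresh_subset_exists[of "{i, i'}" 3 N] by auto
  then obtain u v w where uvw: "{u, v, w} \<subseteq> {..<N} - {i, i'}" "u \<noteq> v" "v \<noteq> w" "u \<noteq> w"
    by (auto simp: card_3_iff)
  then have "tame_pair col N u v \<or> tame_pair col N v u" "tame_pair col N v w \<or> tame_pair col N w v"
    "tame_pair col N u w \<or> tame_pair col N w u"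
    using tame_pair_or_swap[OF assms(2)] by auto
  then obtain x y z where "x \<in> {u, v, w}" "y \<in> {u, v, w}" "z \<in> {u, v, w}"
    "x \<noteq> y" "y \<noteq> z" "x \<noteq> z" "tame_pair col N x y" "tame_pair col N y z"
    by (rule tournament3_path[OF uvw(2-4)])
  then show ?thesis
    using that uvw(1) by blast
qed

lemma off_colour_singletons_eq:
  assumes "N \<ge> 5" "\<not> has_copy A2b_A2r N col"
    and inner: "\<And>a b X. tame_pair col N a b \<Longrightarrow> X \<in> inner_subcube N a b \<Longrightarrow> col X = c"
    and "i < N" "i' < N" "col {i} \<noteq> c" "col {i'} \<noteq> c"
  shows "i = i'"
proof (rule ccontr)
  assume "i \<noteq> i'"
  obtain x y z where xyz: "x < N" "y < N" "z < N" "x \<noteq> y" "y \<noteq> z" "x \<noteq> z"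
    "{x, y, z} \<inter> {i, i'} = {}" and tame: "tame_pair col N x y" "tame_pair col N y z"
    using tame_path_avoiding[OF assms(1,2)] by blast
  have "card {x, z} + 2 \<le> N" "card {y, x} + 2 \<le> N"
    using card_length[of "[x, z]"] card_length[of "[y, x]"] assms(1) by simp_all
  then have "{x, z} \<in> inner_subcube N x y" "{y, x} \<in> inner_subcube N y z"
    using xyz by (auto intro: small_set_in_inner_subcube)
  then have "col {x, z} = c" "col {y, x} = c"
    using inner tame by blast+
  then have "has_copy A2b_A2r N col"
    using xyz assms(4-7) \<open>i \<noteq> i'\<close>
    by (intro has_copy_A2b_A2rI[of "{x, z}" N "{y, x}" "{i}" "{i'}" col c])
      (auto simp: incomparable_def)
  then show False
    using assms(2) by blast
qed

lemma off_colour_cosingletons_eq: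
  assumes "N \<ge> 5" "\<not> has_copy A2b_A2r N col"
    and inner: "\<And>a b X. tame_pair col N a b \<Longrightarrow> X \<in> inner_subcube N a b \<Longrightarrow> col X = c"
    and "i < N" "i' < N" "col ({..<N} - {i}) \<noteq> c" "col ({..<N} - {i'}) \<noteq> c"
  shows "i = i'"
proof (rule ccontr)
  assume "i \<noteq> i'"
  obtain x y z where xyz: "x < N" "y < N" "z < N" "x \<noteq> y" "y \<noteq> z" "x \<noteq> z"
    "{x, y, z} \<inter> {i, i'} = {}" and tame: "tame_pair col N x y" "tame_pair col N y z"
    using tame_path_avoiding[OF assms(1,2)] by blast
  have "card {y, z} + 2 \<le> N" "card {z, x} + 2 \<le> N"
    using card_length[of "[y, z]"] card_length[of "[z, x]"] assms(1) by simp_all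
  then have "{y, z} \<in> inner_subcube N y x" "{z, x} \<in> inner_subcube N z y"
    using xyz by (auto intro: small_set_in_inner_subcube)
  then have "{..<N} - {y, z} \<in> inner_subcube N x y" "{..<N} - {z, x} \<in> inner_subcube N y z"
    using xyz compl_in_inner_subcube by blast+
  then have "col ({..<N} - {y, z}) = c" "col ({..<N} - {z, x}) = c"
    using inner tame by blast+
  then have "has_copy A2b_A2r N col"
    using xyz assms(4-7) \<open>i \<noteq> i'\<close>
    by (intro has_copy_A2b_A2rI[of "{..<N} - {y, z}" N "{..<N} - {z, x}" "{..<N} - {i}" "{..<N} - {i'}" col c])
      (auto simp: incomparable_def)
  then show False
    using assms(2) by blast
qed

lemma has_copy_A2b_A2r_or_has_mono_Q:
  assumes "n \<ge> 3"
  shows "has_copy A2b_A2r (n + 2) col \<or> has_mono_Q n (n + 2) col"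
proof (rule ccontr)
  define N where "N = n + 2"
  assume "\<not> ?thesis"
  then have no_copy: "\<not> has_copy A2b_A2r N col" and no_mono: "\<not> has_mono_Q n N col"
    unfolding N_def by auto
  have "N \<ge> 5"
    using assms unfolding N_def by simp
  obtain c where inner: "\<And>i j X. tame_pair col N i j \<Longrightarrow> X \<in> inner_subcube N i j \<Longrightarrow> col X = c"
    using tame_pairs_common_inner_colour[OF \<open>N \<ge> 5\<close> no_copy] by blast
  have ends: "col {i} \<noteq> c \<or> col ({..<N} - {j}) \<noteq> c" if "tame_pair col N i j" for i j
  proof (rule subcube_end_off_colour[OF no_mono N_def])
    show "i < N" "j < N" "i \<noteq> j"
      using tame_pairD[OF that] by auto
    show "\<forall>X\<in>inner_subcube N i j. col X = c"
      using inner[OF that] by blast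
  qed
  obtain s where s: "\<And>i. i < N \<Longrightarrow> col {i} \<noteq> c \<Longrightarrow> i = s"
  proof (cases "\<exists>s<N. col {s} \<noteq> c")
    case True
    then obtain s0 where "s0 < N" "col {s0} \<noteq> c"
      by blast
    then show ?thesis
      by (intro that off_colour_singletons_eq[OF \<open>N \<ge> 5\<close> no_copy inner])
  qed (use that in blast)
  obtain t where t: "\<And>j. j < N \<Longrightarrow> col ({..<N} - {j}) \<noteq> c \<Longrightarrow> j = t"
  proof (cases "\<exists>t<N. col ({..<N} - {t}) \<noteq> c")
    case True
    then obtain t0 where "t0 < N" "col ({..<N} - {t0}) \<noteq> c"
      by blast
    then show ?thesis
      by (intro that off_colour_cosingletons_eq[OF \<open>N \<ge> 5\<close> no_copy inner])
  qed (use that in blast)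
  have "card {s, t} + 2 \<le> N"
    using card_length[of "[s, t]"] \<open>N \<ge> 5\<close> by simp
  then obtain B where "B \<subseteq> {..<N} - {s, t}" "card B = 2"
    using fresh_subset_exists[of "{s, t}" 2 N] by auto
  then obtain p q where pq: "p < N" "q < N" "p \<noteq> q" "p \<notin> {s, t}" "q \<notin> {s, t}"
    by (auto simp: card_2_iff)
  then show False
    using tame_pair_or_swap[OF no_copy pq(1-3)] ends s t by blast
qed

theorem lemma12:
  fixes n :: nat
  assumes "n \<ge> 3"
  shows "eh_property (par_comp (colored_antichain 2 blue) (colored_antichain 2 red)) n (n + 2)
       \<and> poset_EH (par_comp (colored_antichain 2 blue) (colored_antichain 2 red)) n = n + 2"
proof
  show upper: "eh_property A2b_A2r n (n + 2)"
    unfolding eh_property_def using has_copy_A2b_A2r_or_has_mono_Q[OF assms] by blast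
  show "poset_EH A2b_A2r n = n + 2"
    unfolding poset_EH_def
  proof (rule Least_equality)
    show "n + 2 \<le> N" if "eh_property A2b_A2r n N" for N
      using that not_eh_property_A2b_A2r[of n N] assms by linarith
  qed (rule upper)
qed

end
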